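(* Let $c_i:=c_i(\alpha,\beta,0)\in\mathbb{Q}[\alpha,\beta]$. Then for every integer $n$, $$(n+2)c_{n+2}+(n+1-r)\alpha c_{n+1}+(n+1-2r)\frac{\alpha^2-\beta}{4}c_n=0.$$
   Context: Fix an integer $r\ge1$ and indeterminates $\alpha,\beta,\gamma$. Define polynomials $c_n=c_n(\alpha,\beta,\gamma)\in\mathbb{Q}[\alpha,\beta,\gamma]$ by $c_n=0$ for $n<0$, $c_0=1$, and for every integer $n\ge-3$, $$(n+4)c_{n+4}+(2n+6-r)\alpha c_{n+3}+\left[(n+2-r)\alpha^2+(2n+5-2r)\frac{\alpha^2-\beta}{4}\right]c_{n+2}+\left[(2n+3-3r)\alpha\frac{\alpha^2-\beta}{4}+\frac{\gamma}{2}\right]c_{n+1}+\frac{1}{16}(\alpha^2-\beta)^2(n+1-2r)c_n=0.$$ $c_n(\alpha,\beta,0)$ denotes $c_n$ with $\gamma$ set to $0$. *)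

theory Defs
  imports Main
begin

text \<open>The polynomials c_n in Q[alpha,beta,gamma] are rendered by their values at
  arbitrary elements alpha, beta, gamma of an arbitrary field of characteristic 0
  (this includes Q and fields of rational functions over Q).
  cseq r a b g m is c_m for m a natural number, the recursion being solved for
  c_{n+4} with n = m - 3 (as an integer) where Suc m = n + 4.\<close>

fun cseq :: "int \<Rightarrow> 'a::field_char_0 \<Rightarrow> 'a \<Rightarrow> 'a \<Rightarrow> nat \<Rightarrow> 'a" where
  "cseq r a b g 0 = 1"
| "cseq r a b g (Suc m) =
     (let n = int m - 3;
          c3 = cseq r a b g m;
          c2 = (if m \<ge> 1 then cseq r a b g (m - 1) else 0);
          c1 = (if m \<ge> 2 then cseq r a b g (m - 2) else 0);
          c0 = (if m \<ge> 3 then cseq r a b g (m - 3) else 0);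
          d = (a^2 - b) / 4
      in - ( of_int (2*n + 6 - r) * a * c3
           + (of_int (n + 2 - r) * a^2 + of_int (2*n + 5 - 2*r) * d) * c2
           + (of_int (2*n + 3 - 3*r) * a * d + g / 2) * c1
           + (a^2 - b)^2 / 16 * of_int (n + 1 - 2*r) * c0 ) / of_nat (Suc m))"

definition c :: "int \<Rightarrow> 'a::field_char_0 \<Rightarrow> 'a \<Rightarrow> 'a \<Rightarrow> int \<Rightarrow> 'a" where
  "c r a b g n = (if n < 0 then 0 else cseq r a b g (nat n))"

end

theory Submission
  imports Defs
begin

text \<open>Put \<open>d = (\<alpha>\<^sup>2 - \<beta>)/4\<close> and let \<open>T\<^sub>n\<close> be the left-hand side of the claimed three-term
  relation. For \<open>\<gamma> = 0\<close> the four-term recurrence defining \<open>c\<^sub>n\<close> is exactly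
  \<open>T\<^sub>n\<^sub>+\<^sub>2 + \<alpha> T\<^sub>n\<^sub>+\<^sub>1 + d T\<^sub>n = 0\<close>, i.e. the recurrence operator factors through \<open>T\<close>.
  Since \<open>T\<^sub>n = 0\<close> for \<open>n \<le> -2\<close> (the factor \<open>n + 2\<close> kills \<open>c\<^sub>0\<close> at \<open>n = -2\<close>), this
  second-order recurrence forces \<open>T\<^sub>n = 0\<close> for all \<open>n\<close>.\<close>

lemma c_neg: "n < 0 \<Longrightarrow> c r a b g n = 0"
  by (simp add: c_def del: cseq.simps)

lemma c_recurrence:
  fixes a b g :: "'a::field_char_0"
  assumes "n \<ge> -3"
  shows "of_int (n+4) * c r a b g (n+4) + of_int (2*n+6-r) * a * c r a b g (n+3)
    + (of_int (n+2-r) * a^2 + of_int (2*n+5-2*r) * ((a^2-b)/4)) * c r a b g (n+2)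
    + (of_int (2*n+3-3*r) * a * ((a^2-b)/4) + g/2) * c r a b g (n+1)
    + (a^2-b)^2/16 * of_int (n+1-2*r) * c r a b g n = 0"
proof -
  define m where "m = nat (n+3)"
  have n: "n = int m - 3" using assms m_def by simp
  have c4: "c r a b g (n+4) = cseq r a b g (Suc m)"
    using n by (simp add: c_def del: cseq.simps) (metis Suc_as_int add.commute nat_int)
  have c3: "c r a b g (n+3) = cseq r a b g m"
    using n by (simp add: c_def del: cseq.simps)
  have c2: "c r a b g (n+2) = (if m \<ge> 1 then cseq r a b g (m-1) else 0)"
    and c1: "c r a b g (n+1) = (if m \<ge> 2 then cseq r a b g (m-2) else 0)"
    and c0: "c r a b g n = (if m \<ge> 3 then cseq r a b g (m-3) else 0)"
    using n by (simp_all add: c_def nat_diff_distrib' del: cseq.simps)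
  define X where "X = of_int (2*n + 6 - r) * a * c r a b g (n+3)
    + (of_int (n + 2 - r) * a^2 + of_int (2*n + 5 - 2*r) * ((a^2 - b) / 4)) * c r a b g (n+2)
    + (of_int (2*n + 3 - 3*r) * a * ((a^2 - b) / 4) + g / 2) * c r a b g (n+1)
    + (a^2 - b)^2 / 16 * of_int (n + 1 - 2*r) * c r a b g n"
  have step: "cseq r a b g (Suc m) = - X / of_nat (Suc m)"
    unfolding X_def c3 c2 c1 c0 unfolding n by (simp only: cseq.simps Let_def)
  have "of_int (n+4) = (of_nat (Suc m) :: 'a)"
    using n by simp
  then have "of_int (n+4) * c r a b g (n+4) + X = 0"
    unfolding c4 step by (simp del: of_nat_Suc)
  then show ?thesis
    unfolding X_def by (simp only: add.assoc)
qed

lemma second_order_recurrence_vanishes: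
  fixes f :: "int \<Rightarrow> 'a::ring"
  assumes initial: "\<And>n. n \<le> n\<^sub>0 \<Longrightarrow> f n = 0"
    and rec: "\<And>n. n > n\<^sub>0 \<Longrightarrow> f n + p n * f (n - 1) + q n * f (n - 2) = 0"
  shows "f n = 0"
proof (induction "nat (n - n\<^sub>0)" arbitrary: n rule: less_induct)
  case less
  show ?case
  proof (cases "n \<le> n\<^sub>0")
    case True
    then show ?thesis by (rule initial)
  next
    case False
    then have "f (n - 1) = 0" "f (n - 2) = 0"
      using less by auto
    then show ?thesis
      using rec[of n] False by simp
  qed
qed

lemma three_term_operator_factorization:
  fixes r :: int and a b :: "'a::field_char_0" and y :: "int \<Rightarrow> 'a"
  defines "T \<equiv> \<lambda>n. of_int (n + 2) * y (n + 2) + of_int (n + 1 - r) * a * y (n + 1)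
                  + of_int (n + 1 - 2*r) * ((a^2 - b) / 4) * y n"
  shows "T (n+2) + a * T (n+1) + (a^2 - b) / 4 * T n =
    of_int (n+4) * y (n+4) + of_int (2*n+6-r) * a * y (n+3)
    + (of_int (n+2-r) * a^2 + of_int (2*n+5-2*r) * ((a^2-b)/4)) * y (n+2)
    + (of_int (2*n+3-3*r) * a * ((a^2-b)/4) + 0/2) * y (n+1)
    + (a^2-b)^2/16 * of_int (n+1-2*r) * y n"
proof -
  have "n+2+2 = n+4" "n+2+1 = n+3" "n+1+2 = n+3" "n+1+1 = n+2"
    by simp_all
  then show ?thesis
    unfolding T_def by (simp add: field_simps power2_eq_square)
qed

theorem proposition3p4:
  fixes r :: int and \<alpha> \<beta> :: "'a::field_char_0"
  assumes "r \<ge> 1"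
  shows "\<forall>n::int.
    of_int (n + 2) * c r \<alpha> \<beta> 0 (n + 2)
    + of_int (n + 1 - r) * \<alpha> * c r \<alpha> \<beta> 0 (n + 1)
    + of_int (n + 1 - 2*r) * ((\<alpha>^2 - \<beta>) / 4) * c r \<alpha> \<beta> 0 n = 0"
proof -
  define T where "T n = of_int (n + 2) * c r \<alpha> \<beta> 0 (n + 2)
    + of_int (n + 1 - r) * \<alpha> * c r \<alpha> \<beta> 0 (n + 1)
    + of_int (n + 1 - 2*r) * ((\<alpha>^2 - \<beta>) / 4) * c r \<alpha> \<beta> 0 n" for n
  have initial: "T n = 0" if "n \<le> -2" for n
    using that by (cases "n = -2") (auto simp: T_def c_neg)
  have recurrence: "T n + \<alpha> * T (n - 1) + (\<alpha>^2 - \<beta>) / 4 * T (n - 2) = 0" if "n > -2" for n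
    using three_term_operator_factorization[where y = "c r \<alpha> \<beta> 0" and n = "n - 2"]
      c_recurrence[of "n - 2" r \<alpha> \<beta> 0] that
    by (simp add: T_def)
  have "T n = 0" for n
    using initial recurrence by (rule second_order_recurrence_vanishes)
  then show ?thesis
    unfolding T_def by blast
qed

end
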